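(* Let $N\ge 1$ and $1\le K\le N$ be integers and $\lambda_s,\lambda_d,c>0$. Let $T_1,\dots,T_N$ be i.i.d. with CDF $1-e^{-\lambda_s(t-c)}$ for $t>c$, let $T_{\mathrm D}$ be independent of them with density $\lambda_d e^{-\lambda_d(t-c)}$ for $t>c$, let $T_N(K)$ be the $K$-th smallest of $T_1,\dots,T_N$, and fix $n\in\{1,\dots,N\}$. Define $$\mathcal C_{\mathrm S,1}=\{T_N(K)<T_{\mathrm D}\}\cap\{T_n\le \min\{T_{\mathrm D},T_N(K)\}\},\qquad \mathcal C_{\mathrm F,1}=\{T_N(K)<T_{\mathrm D}\}\cap\{T_n> \min\{T_{\mathrm D},T_N(K)\}\},$$ both assumed to have positive probability. Then $\mathbb E[T_N(K)\mid\mathcal C_{\mathrm S,1}]=\mathbb E[T_N(K)\mid\mathcal C_{\mathrm F,1}]$ and $\mathbb E[T_N(K)^2\mid\mathcal C_{\mathrm S,1}]=\mathbb E[T_N(K)^2\mid\mathcal C_{\mathrm F,1}]$.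
   Context: Model: an access point multicasts a status update with a random (shifted exponential) deadline $T_{\mathrm D}$ to $N$ devices with i.i.d. shifted-exponential delivery times; transmission terminates at $\min\{T_{\mathrm D},T_N(K)\}$. $\mathcal C_{\mathrm S,1}$ (resp. $\mathcal C_{\mathrm F,1}$): device $n$ receives (resp. fails to receive) the update and the transmission stops because $K$ devices received it before the deadline. *)

theory Defs
  imports "HOL-Probability.Probability"
begin

definition kth_smallest :: "nat \<Rightarrow> real list \<Rightarrow> real" where
  "kth_smallest K xs = sort xs ! (K - 1)"

definition cond_exp_event :: "'a measure \<Rightarrow> ('a \<Rightarrow> real) \<Rightarrow> 'a set \<Rightarrow> real" where
  "cond_exp_event M X A = (\<integral>\<omega>. indicator A \<omega> * X \<omega> \<partial>M) / measure M A"

end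

theory Submission
  imports Defs
begin

text \<open>
  On the event \<open>T_N(K) < T_D\<close> transmission stops at \<open>T_N(K)\<close>, so \<open>C_S1\<close> (resp. \<open>C_F1\<close>)
  says that \<open>T_n\<close> is among the \<open>K\<close> smallest (resp. the \<open>N - K\<close> largest) delivery times.
  The delivery times are i.i.d. with a continuous law, hence a.s. distinct, and exchangeable
  jointly with the independent deadline: swapping \<open>T_n\<close> with any \<open>T_i\<close> changes neither
  \<open>T_N(K)\<close> nor \<open>T_D\<close>. Averaging over \<open>i\<close>, and using that exactly \<open>K\<close> indices satisfy
  \<open>T_i \<le> T_N(K)\<close>, gives \<open>E[g(T_N(K)) 1_C_S1] = K/N \<Phi>(g)\<close> and
  \<open>E[g(T_N(K)) 1_C_F1] = (N - K)/N \<Phi>(g)\<close> with \<open>\<Phi>(g) = E[g(T_N(K)) 1{T_N(K) < T_D}]\<close>,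
  so both conditional expectations equal \<open>\<Phi>(g) / \<Phi>(1)\<close>.
\<close>

lemma sorted_nth_le_iff:
  fixes s :: "real list"
  assumes "sorted s" "k < length s"
  shows "s ! k \<le> t \<longleftrightarrow> k < length (filter (\<lambda>x. x \<le> t) s)"
proof -
  let ?J = "{j. j < length s \<and> s ! j \<le> t}"
  have "s ! k \<le> t \<longleftrightarrow> k < card ?J"
  proof
    assume "s ! k \<le> t"
    then have "{0..k} \<subseteq> ?J"
      using assms sorted_nth_mono by fastforce
    from card_mono[OF _ this] show "k < card ?J" by simp
  next
    assume k: "k < card ?J"
    show "s ! k \<le> t"
    proof (rule ccontr)
      assume "\<not> s ! k \<le> t"
      then have "?J \<subseteq> {0..<k}"
        using assms sorted_nth_mono by (smt (verit, best) atLeastLessThan_iff mem_Collect_eq not_le subsetI zero_le)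
      from card_mono[OF _ this] k show False by simp
    qed
  qed
  then show ?thesis by (simp add: length_filter_conv_card)
qed

lemma length_filter_sort: "length (filter P (sort xs)) = length (filter P xs)"
  by (metis mset_filter mset_sort size_mset)

lemma kth_smallest_le_iff:
  fixes xs :: "real list"
  assumes "1 \<le> K" "K \<le> length xs"
  shows "kth_smallest K xs \<le> t \<longleftrightarrow> K \<le> length (filter (\<lambda>x. x \<le> t) xs)"
  using sorted_nth_le_iff[of "sort xs" "K - 1" t] assms
  by (auto simp: kth_smallest_def length_filter_sort)

lemma length_filter_le_kth_smallest:
  fixes xs :: "real list"
  assumes "distinct xs" "1 \<le> K" "K \<le> length xs"
  shows "length (filter (\<lambda>x. x \<le> kth_smallest K xs) xs) = K"
proof -
  let ?s = "sort xs" and ?L = "length (filter (\<lambda>x. x \<le> kth_smallest K xs) xs)"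
  have "K \<le> ?L"
    using kth_smallest_le_iff[OF assms(2,3), of "kth_smallest K xs"] by simp
  moreover have "?L \<le> K"
  proof (cases "K < length xs")
    case True
    have "sorted_wrt (<) ?s"
      using assms(1) by (simp add: strict_sorted_iff)
    then have "?s ! (K - 1) < ?s ! K"
      using sorted_wrt_nth_less[OF _, of "(<)" ?s "K - 1" K] True assms(2) by simp
    then show ?thesis
      using sorted_nth_le_iff[of ?s K "kth_smallest K xs"] True
      by (simp add: kth_smallest_def length_filter_sort)
  next
    case False
    then show ?thesis using length_filter_le[of "\<lambda>x. x \<le> kth_smallest K xs" xs] by linarith
  qed
  ultimately show ?thesis by simp
qed

lemma length_filter_gt_kth_smallest:
  fixes xs :: "real list"
  assumes "distinct xs" "1 \<le> K" "K \<le> length xs"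
  shows "length (filter (\<lambda>x. kth_smallest K xs < x) xs) = length xs - K"
  using sum_length_filter_compl[of "\<lambda>x. x \<le> kth_smallest K xs" xs]
    length_filter_le_kth_smallest[OF assms] by (simp add: not_le)

lemma kth_smallest_mset_cong:
  "mset xs = mset ys \<Longrightarrow> kth_smallest K xs = kth_smallest K ys"
  unfolding kth_smallest_def using properties_for_sort[of "sort ys" xs] by simp

lemma length_filter_map_upt:
  "length (filter P (map y [1..<N+1])) = card {i \<in> {1..N}. P (y i)}"
proof -
  have "length (filter P (map y [1..<N+1])) = card (set (filter (P \<circ> y) [1..<N+1]))"
    by (metis distinct_card distinct_filter distinct_upt length_filter_map)
  also have "set (filter (P \<circ> y) [1..<N+1]) = {i \<in> {1..N}. P (y i)}"
    by auto
  finally show ?thesis .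
qed

lemma kth_smallest_permutes:
  assumes "\<pi> permutes {1..N}"
  shows "kth_smallest K (map (y \<circ> \<pi>) [1..<N+1]) = kth_smallest K (map y [1..<N+1])"
proof (rule kth_smallest_mset_cong)
  have "image_mset \<pi> (mset_set {1..N}) = mset_set {1..N}"
    using assms by (rule permutes_image_mset)
  then show "mset (map (y \<circ> \<pi>) [1..<N+1]) = mset (map y [1..<N+1])"
    by (simp del: upt_Suc add: atLeastLessThanSuc_atLeastAtMost flip: image_mset.compositionality)
qed

lemma measurable_length_filter:
  assumes "\<And>i. i \<in> set is \<Longrightarrow> {\<omega> \<in> space M. P i \<omega>} \<in> sets M"
  shows "(\<lambda>\<omega>. length (filter (\<lambda>i. P i \<omega>) is)) \<in> measurable M (count_space UNIV)"
  using assms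
proof (induction "is")
  case (Cons i "is")
  have "(\<lambda>\<omega>. length (filter (\<lambda>i. P i \<omega>) (i # is)))
      = (\<lambda>\<omega>. if P i \<omega> then Suc (length (filter (\<lambda>i. P i \<omega>) is)) else length (filter (\<lambda>i. P i \<omega>) is))"
    by (simp add: fun_eq_iff)
  also have "\<dots> \<in> measurable M (count_space UNIV)"
    by (intro measurable_If measurable_compose[of _ M "count_space UNIV" Suc] Cons.IH)
      (use Cons.prems in auto)
  finally show ?case .
qed simp

lemma borel_measurable_kth_smallest:
  assumes "1 \<le> K" "K \<le> length is" "\<And>i. i \<in> set is \<Longrightarrow> Y i \<in> borel_measurable M"
  shows "(\<lambda>\<omega>. kth_smallest K (map (\<lambda>i. Y i \<omega>) is)) \<in> borel_measurable M"
  unfolding borel_measurable_iff_le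
proof
  fix a
  let ?count = "\<lambda>\<omega>. length (filter (\<lambda>i. Y i \<omega> \<le> a) is)"
  have "?count \<in> measurable M (count_space UNIV)"
    using assms(3) by (intro measurable_length_filter) measurable
  then have "?count -` {K..} \<inter> space M \<in> sets M"
    by (rule measurable_sets) simp
  moreover have "{\<omega> \<in> space M. kth_smallest K (map (\<lambda>i. Y i \<omega>) is) \<le> a} = ?count -` {K..} \<inter> space M"
    using kth_smallest_le_iff[of K "map (\<lambda>i. Y i _) is" a] assms(1,2) by (auto simp: comp_def)
  ultimately show "{\<omega> \<in> space M. kth_smallest K (map (\<lambda>i. Y i \<omega>) is) \<le> a} \<in> sets M"
    by simp
qed

lemma (in prob_space) cdf_distr:
  fixes X :: "'a \<Rightarrow> real"
  shows "random_variable borel X \<Longrightarrow> cdf (distr M borel X) t = prob {\<omega> \<in> space M. X \<omega> \<le> t}"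
  by (simp add: cdf_def measure_distr vimage_def Int_def conj_commute)

lemma (in prob_space) distr_eq_if_cdf_eq:
  fixes X Y :: "'a \<Rightarrow> real"
  assumes "random_variable borel X" "random_variable borel Y"
    and "\<And>t. prob {\<omega> \<in> space M. X \<omega> \<le> t} = prob {\<omega> \<in> space M. Y \<omega> \<le> t}"
  shows "distr M borel X = distr M borel Y"
  using assms by (intro cdf_unique real_distribution_distr) (auto simp: cdf_distr)

lemma (in prob_space) emeasure_distr_singleton_eq_0:
  fixes X :: "'a \<Rightarrow> real"
  assumes "random_variable borel X" and "isCont (\<lambda>s. prob {\<omega> \<in> space M. X \<omega> \<le> s}) t"
  shows "emeasure (distr M borel X) {t} = 0"
proof -
  interpret X: real_distribution "distr M borel X"
    using assms(1) by (rule real_distribution_distr)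
  have "cdf (distr M borel X) = (\<lambda>s. prob {\<omega> \<in> space M. X \<omega> \<le> s})"
    using assms(1) by (simp add: fun_eq_iff cdf_distr)
  then have "measure (distr M borel X) {t} = 0"
    using assms(2) X.isCont_cdf by simp
  then show ?thesis by (simp add: X.emeasure_eq_measure)
qed

lemma (in prob_space) indep_vars_imp_indep_var:
  assumes "indep_vars M' X I" "i \<in> I" "j \<in> I" "i \<noteq> j"
  shows "indep_var (M' i) (X i) (M' j) (X j)"
proof -
  have "indep_var (PiM {i} M') (\<lambda>\<omega>. \<lambda>k\<in>{i}. X k \<omega>) (PiM {j} M') (\<lambda>\<omega>. \<lambda>k\<in>{j}. X k \<omega>)"
    using assms by (intro indep_var_restrict) auto
  then have "indep_var (M' i) ((\<lambda>x. x i) \<circ> (\<lambda>\<omega>. \<lambda>k\<in>{i}. X k \<omega>)) (M' j) ((\<lambda>x. x j) \<circ> (\<lambda>\<omega>. \<lambda>k\<in>{j}. X k \<omega>))"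
    by (rule indep_var_compose) (simp_all add: measurable_component_singleton)
  then show ?thesis by (simp add: comp_def)
qed

lemma (in prob_space) AE_neq_if_indep_var:
  fixes X Y :: "'a \<Rightarrow> real"
  assumes indep: "indep_var borel X borel Y" and atomless: "\<And>t. emeasure (distr M borel X) {t} = 0"
  shows "AE \<omega> in M. X \<omega> \<noteq> Y \<omega>"
proof (rule AE_I')
  let ?D = "{p :: real \<times> real. fst p = snd p}"
  have X: "random_variable borel X" and Y: "random_variable borel Y"
    using indep by (simp_all add: indep_var_distribution_eq)
  interpret pair_sigma_finite "distr M borel X" "distr M borel Y"
    using X Y by (intro pair_sigma_finite.intro prob_space_imp_sigma_finite prob_space_distr)
  have D: "?D \<in> sets (borel \<Otimes>\<^sub>M borel)"
    unfolding borel_prod by (rule borel_closed) (intro closed_Collect_eq continuous_intros)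
  have "emeasure M {\<omega> \<in> space M. X \<omega> = Y \<omega>} = emeasure (distr M (borel \<Otimes>\<^sub>M borel) (\<lambda>\<omega>. (X \<omega>, Y \<omega>))) ?D"
    using X Y D by (subst emeasure_distr) (auto intro: arg_cong2[where f=emeasure])
  also have "\<dots> = emeasure (distr M borel X \<Otimes>\<^sub>M distr M borel Y) ?D"
    using indep by (simp add: indep_var_distribution_eq)
  also have "\<dots> = (\<integral>\<^sup>+y. emeasure (distr M borel X) {y} \<partial>distr M borel Y)"
    using D by (simp add: emeasure_pair_measure_alt2 vimage_def)
  also have "\<dots> = 0"
    by (simp add: atomless)
  finally show "{\<omega> \<in> space M. X \<omega> = Y \<omega>} \<in> null_sets M"
    using X Y by (simp add: null_sets_def) measurable
qed auto

lemma (in prob_space) distr_reindex_eq_if_indep_vars: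
  assumes indep: "indep_vars (\<lambda>_. S) X I" and rv: "\<And>i. i \<in> I \<Longrightarrow> random_variable S (X i)"
    and f: "inj_on f I" "f \<in> I \<rightarrow> I"
    and same_distr: "\<And>i. i \<in> I \<Longrightarrow> distr M S (X (f i)) = distr M S (X i)"
  shows "distr M (PiM I (\<lambda>_. S)) (\<lambda>\<omega>. \<lambda>i\<in>I. X (f i) \<omega>) = distr M (PiM I (\<lambda>_. S)) (\<lambda>\<omega>. \<lambda>i\<in>I. X i \<omega>)"
proof (cases "I = {}")
  case False
  define \<mu> where "\<mu> i = distr M S (X i)" for i
  let ?X = "\<lambda>\<omega>. \<lambda>i\<in>I. X i \<omega>" and ?reindex = "\<lambda>x. \<lambda>i\<in>I. x (f i)"
  have joint: "distr M (PiM I (\<lambda>_. S)) ?X = PiM I \<mu>"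
    unfolding \<mu>_def using indep_vars_iff_distr_eq_PiM'[where I=I and M'="\<lambda>_. S" and X=X, OF False rv] indep by blast
  have "distr M (PiM I (\<lambda>_. S)) (\<lambda>\<omega>. \<lambda>i\<in>I. X (f i) \<omega>) = distr M (PiM I (\<lambda>_. S)) (?reindex \<circ> ?X)"
    using f(2) by (intro distr_cong) (auto simp: fun_eq_iff Pi_iff)
  also have "\<dots> = distr (distr M (PiM I (\<lambda>_. S)) ?X) (PiM I (\<lambda>_. S)) ?reindex"
    using rv f(2) by (intro distr_distr[symmetric] measurable_restrict measurable_component_singleton) auto
  also have "\<dots> = distr (PiM I \<mu>) (PiM I (\<lambda>i. \<mu> (f i))) ?reindex"
    unfolding joint by (intro distr_cong sets_PiM_cong) (simp_all add: \<mu>_def)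
  also have "\<dots> = PiM I (\<lambda>i. \<mu> (f i))"
    using f rv by (intro distr_PiM_reindex) (auto simp: \<mu>_def prob_space_distr)
  also have "\<dots> = PiM I \<mu>"
    using same_distr by (intro PiM_cong) (simp_all add: \<mu>_def)
  finally show ?thesis
    by (simp add: joint)
qed (simp add: restrict_def)

lemma integral_eq_if_nn_integral_parts_eq:
  fixes F G :: "'a \<Rightarrow> real"
  assumes "F \<in> borel_measurable M" "G \<in> borel_measurable M"
    and pos: "(\<integral>\<^sup>+x. F x \<partial>M) = (\<integral>\<^sup>+x. G x \<partial>M)"
    and neg: "(\<integral>\<^sup>+x. - F x \<partial>M) = (\<integral>\<^sup>+x. - G x \<partial>M)"
  shows "integral\<^sup>L M F = integral\<^sup>L M G"
proof (cases "integrable M F")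
  case True
  then have "integrable M G"
    using assms by (simp add: real_integrable_def)
  with True show ?thesis
    using pos neg by (simp add: real_lebesgue_integral_def)
next
  case False
  then have "\<not> integrable M G"
    using assms by (simp add: real_integrable_def)
  with False show ?thesis
    by (simp add: not_integrable_integral_eq)
qed

lemma isCont_shifted_exponential_cdf:
  fixes ls c t :: real
  assumes "0 < ls"
  shows "isCont (\<lambda>s. if c < s then 1 - exp (- ls * (s - c)) else 0) t"
proof -
  have "(\<lambda>s. if c < s then 1 - exp (- ls * (s - c)) else 0) = (\<lambda>s. max 0 (1 - exp (- ls * (s - c))))"
  proof
    fix s
    have "c < s \<longleftrightarrow> exp (- ls * (s - c)) < 1"
      using assms by (simp add: zero_less_mult_iff)
    then show "(if c < s then 1 - exp (- ls * (s - c)) else 0) = max 0 (1 - exp (- ls * (s - c)))"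
      by auto
  qed
  then show ?thesis
    by (simp add: continuous_intros)
qed

lemma cond_exp_event_eq_divide:
  fixes u v a k :: real
  assumes "measure M A > 0" "a \<noteq> 0"
    and "a * (\<integral>\<omega>. indicator A \<omega> * X \<omega> \<partial>M) = k * u" and "a * measure M A = k * v"
  shows "cond_exp_event M X A = u / v"
proof -
  let ?I = "\<integral>\<omega>. indicator A \<omega> * X \<omega> \<partial>M"
  have "a * (v * ?I) = a * (u * measure M A)"
    using assms(3,4) by (metis mult.commute mult.left_commute)
  moreover have "v \<noteq> 0"
    using assms by auto
  ultimately show ?thesis
    using assms(1,2) unfolding cond_exp_event_def by (simp add: field_simps)
qed

locale iid_delivery_times = prob_space M for M :: "'a measure" +
  fixes N :: nat and T :: "nat \<Rightarrow> 'a \<Rightarrow> real" and TD :: "'a \<Rightarrow> real"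
  assumes random_variable_T: "i \<in> {1..N} \<Longrightarrow> random_variable borel (T i)"
    and random_variable_TD: "random_variable borel TD"
    and indep: "indep_vars (\<lambda>_. borel) (case_option TD T) (insert None (Some ` {1..N}))"
    and distr_T_eq: "i \<in> {1..N} \<Longrightarrow> j \<in> {1..N} \<Longrightarrow> distr M borel (T i) = distr M borel (T j)"
    and distr_T_atomless: "i \<in> {1..N} \<Longrightarrow> emeasure (distr M borel (T i)) {t} = 0"
begin

definition order_stat :: "nat \<Rightarrow> 'a \<Rightarrow> real" where
  "order_stat K \<omega> = kth_smallest K (map (\<lambda>i. T i \<omega>) [1..<N+1])"

lemma borel_measurable_order_stat:
  "1 \<le> K \<Longrightarrow> K \<le> N \<Longrightarrow> order_stat K \<in> borel_measurable M"
  unfolding order_stat_def[abs_def]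
  by (rule borel_measurable_kth_smallest) (auto intro: random_variable_T)

lemma AE_distinct_T: "AE \<omega> in M. distinct (map (\<lambda>i. T i \<omega>) [1..<N+1])"
proof -
  have "AE \<omega> in M. T i \<omega> \<noteq> T j \<omega>" if "i \<in> {1..N}" "j \<in> {1..N}" "i \<noteq> j" for i j
  proof (rule AE_neq_if_indep_var)
    show "indep_var borel (T i) borel (T j)"
      using indep_vars_imp_indep_var[OF indep, of "Some i" "Some j"] that by simp
  qed (rule distr_T_atomless[OF that(1)])
  then have "AE \<omega> in M. \<forall>i\<in>{1..N}. \<forall>j\<in>{1..N}. i \<noteq> j \<longrightarrow> T i \<omega> \<noteq> T j \<omega>"
    by (simp add: AE_finite_all)
  then have "AE \<omega> in M. inj_on (\<lambda>i. T i \<omega>) {1..N}"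
    by eventually_elim (auto simp: inj_on_def)
  then show ?thesis
    by eventually_elim (simp add: distinct_map atLeastLessThanSuc_atLeastAtMost del: upt_Suc)
qed

lemma AE_card_le_order_stat:
  assumes "1 \<le> K" "K \<le> N"
  shows "AE \<omega> in M. card {i \<in> {1..N}. T i \<omega> \<le> order_stat K \<omega>} = K"
  using AE_distinct_T
proof eventually_elim
  case (elim \<omega>)
  then have "length (filter (\<lambda>x. x \<le> order_stat K \<omega>) (map (\<lambda>i. T i \<omega>) [1..<N+1])) = K"
    unfolding order_stat_def using assms by (subst length_filter_le_kth_smallest) simp_all
  then show ?case
    by (simp only: length_filter_map_upt)
qed

lemma AE_card_gt_order_stat:
  assumes "1 \<le> K" "K \<le> N"
  shows "AE \<omega> in M. card {i \<in> {1..N}. order_stat K \<omega> < T i \<omega>} = N - K"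
  using AE_distinct_T
proof eventually_elim
  case (elim \<omega>)
  then have "length (filter (\<lambda>x. order_stat K \<omega> < x) (map (\<lambda>i. T i \<omega>) [1..<N+1])) = N - K"
    unfolding order_stat_def using assms by (subst length_filter_gt_kth_smallest) simp_all
  then show ?case
    by (simp only: length_filter_map_upt)
qed

lemma nn_integral_exchange:
  fixes h :: "real \<times> real \<times> real \<Rightarrow> ennreal"
  assumes ij: "i \<in> {1..N}" "j \<in> {1..N}" and K: "1 \<le> K" "K \<le> N"
    and h: "h \<in> borel_measurable borel"
  shows "(\<integral>\<^sup>+\<omega>. h (T i \<omega>, order_stat K \<omega>, TD \<omega>) \<partial>M) = (\<integral>\<^sup>+\<omega>. h (T j \<omega>, order_stat K \<omega>, TD \<omega>) \<partial>M)"
proof -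
  define I where "I = insert None (Some ` {1..N})"
  define X where "X = case_option TD T"
  define \<tau> where "\<tau> = Transposition.transpose i j"
  let ?P = "PiM I (\<lambda>_. borel) :: (nat option \<Rightarrow> real) measure"
  let ?X = "\<lambda>\<omega>. \<lambda>k\<in>I. X k \<omega>" and ?X\<tau> = "\<lambda>\<omega>. \<lambda>k\<in>I. X (map_option \<tau> k) \<omega>"
  define g where "g x = h (x (Some i), kth_smallest K (map (\<lambda>k. x (Some k)) [1..<N+1]), x None)"
    for x :: "nat option \<Rightarrow> real"
  have \<tau>: "\<tau> permutes {1..N}"
    unfolding \<tau>_def using ij by (rule permutes_swap_id)
  have \<tau>_in: "\<tau> m \<in> {1..N}" if "m \<in> {1..N}" for m
    using permutes_in_image[OF \<tau>] that by blast
  have rv: "random_variable borel (X k)" if "k \<in> I" for k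
    using that random_variable_T random_variable_TD by (auto simp: I_def X_def)
  have "(\<lambda>x. (x (Some i), kth_smallest K (map (\<lambda>k. x (Some k)) [1..<N+1]), x None)) \<in> borel_measurable ?P"
    unfolding borel_prod[symmetric] using K ij
    by (intro measurable_Pair borel_measurable_kth_smallest measurable_component_singleton)
      (auto simp: I_def simp del: upt_Suc)
  then have g: "g \<in> borel_measurable ?P"
    unfolding g_def by (rule measurable_compose[OF _ h])
  have exchangeable: "distr M ?P ?X\<tau> = distr M ?P ?X"
  proof (rule distr_reindex_eq_if_indep_vars)
    show "indep_vars (\<lambda>_. borel) X I"
      using indep by (simp add: I_def X_def)
    show "inj_on (map_option \<tau>) I"
      by (rule inj_on_subset[OF option.inj_map[OF permutes_inj[OF \<tau>]]]) simp
    show "map_option \<tau> \<in> I \<rightarrow> I"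
    proof
      fix k assume "k \<in> I"
      then show "map_option \<tau> k \<in> I"
        using \<open>k \<in> I\<close> imageI[OF \<tau>_in, of _ Some] unfolding I_def by (cases k) auto
    qed
    show "distr M borel (X (map_option \<tau> k)) = distr M borel (X k)" if "k \<in> I" for k
      using that unfolding I_def X_def by (auto intro!: distr_T_eq \<tau>_in)
  qed (rule rv)
  have g_X: "g (?X \<omega>) = h (T i \<omega>, order_stat K \<omega>, TD \<omega>)" for \<omega>
  proof -
    have "map (\<lambda>k. ?X \<omega> (Some k)) [1..<N+1] = map (\<lambda>k. T k \<omega>) [1..<N+1]"
      by (rule map_cong[OF refl]) (simp add: I_def X_def del: upt_Suc)
    moreover have "?X \<omega> (Some i) = T i \<omega>" "?X \<omega> None = TD \<omega>"
      using ij by (simp_all add: I_def X_def)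
    ultimately show ?thesis
      by (simp only: g_def order_stat_def)
  qed
  have g_X\<tau>: "g (?X\<tau> \<omega>) = h (T j \<omega>, order_stat K \<omega>, TD \<omega>)" for \<omega>
  proof -
    have "map (\<lambda>k. ?X\<tau> \<omega> (Some k)) [1..<N+1] = map ((\<lambda>k. T k \<omega>) \<circ> \<tau>) [1..<N+1]"
      by (rule map_cong[OF refl]) (simp add: I_def X_def \<tau>_in del: upt_Suc)
    then have "kth_smallest K (map (\<lambda>k. ?X\<tau> \<omega> (Some k)) [1..<N+1]) = order_stat K \<omega>"
      unfolding order_stat_def using \<tau> by (simp only: kth_smallest_permutes)
    moreover have "?X\<tau> \<omega> (Some i) = T j \<omega>" "?X\<tau> \<omega> None = TD \<omega>"
      using ij by (simp_all add: I_def X_def \<tau>_def)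
    ultimately show ?thesis
      by (simp only: g_def)
  qed
  have X: "?X \<in> measurable M ?P" and X\<tau>: "?X\<tau> \<in> measurable M ?P"
    using rv \<tau>_in by (auto intro!: measurable_restrict rv simp: I_def)
  have "(\<integral>\<^sup>+\<omega>. h (T i \<omega>, order_stat K \<omega>, TD \<omega>) \<partial>M) = (\<integral>\<^sup>+x. g x \<partial>distr M ?P ?X)"
    using g by (simp add: nn_integral_distr[OF X] g_X)
  also have "\<dots> = (\<integral>\<^sup>+x. g x \<partial>distr M ?P ?X\<tau>)"
    by (simp add: exchangeable)
  also have "\<dots> = (\<integral>\<^sup>+\<omega>. h (T j \<omega>, order_stat K \<omega>, TD \<omega>) \<partial>M)"
    using g by (simp add: nn_integral_distr[OF X\<tau>] g_X\<tau>)
  finally show ?thesis .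
qed

lemma nn_integral_rank:
  fixes h :: "real \<times> real \<Rightarrow> ennreal" and R :: "(real \<times> real) set"
  assumes n: "n \<in> {1..N}" and K: "1 \<le> K" "K \<le> N"
    and h: "h \<in> borel_measurable borel" and R: "R \<in> sets borel"
    and count: "AE \<omega> in M. card {i \<in> {1..N}. (T i \<omega>, order_stat K \<omega>) \<in> R} = m"
  shows "of_nat N * (\<integral>\<^sup>+\<omega>. h (order_stat K \<omega>, TD \<omega>) * indicator R (T n \<omega>, order_stat K \<omega>) \<partial>M)
    = of_nat m * (\<integral>\<^sup>+\<omega>. h (order_stat K \<omega>, TD \<omega>) \<partial>M)"
proof -
  let ?h = "\<lambda>\<omega>. h (order_stat K \<omega>, TD \<omega>)"
  let ?\<Psi> = "\<lambda>i \<omega>. ?h \<omega> * indicator R (T i \<omega>, order_stat K \<omega>)"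
  have [measurable]: "order_stat K \<in> borel_measurable M" "TD \<in> borel_measurable M"
    using K by (simp_all add: borel_measurable_order_stat random_variable_TD)
  have [measurable]: "h \<in> borel_measurable (borel \<Otimes>\<^sub>M borel)" "R \<in> sets (borel \<Otimes>\<^sub>M borel)"
    unfolding borel_prod using h R .
  have \<Psi>: "?\<Psi> i \<in> borel_measurable M" if "i \<in> {1..N}" for i
    using random_variable_T[OF that] by measurable
  have h3: "(\<lambda>(s, t, d). h (t, d) * indicator R (s, t)) \<in> borel_measurable (borel :: (real \<times> real \<times> real) measure)"
    unfolding borel_prod[symmetric] by measurable
  have "of_nat N * (\<integral>\<^sup>+\<omega>. ?\<Psi> n \<omega> \<partial>M) = (\<Sum>i\<in>{1..N}. \<integral>\<^sup>+\<omega>. ?\<Psi> n \<omega> \<partial>M)"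
    by simp
  also have "\<dots> = (\<Sum>i\<in>{1..N}. \<integral>\<^sup>+\<omega>. ?\<Psi> i \<omega> \<partial>M)"
  proof (rule sum.cong[OF refl])
    fix i assume "i \<in> {1..N}"
    then show "(\<integral>\<^sup>+\<omega>. ?\<Psi> n \<omega> \<partial>M) = (\<integral>\<^sup>+\<omega>. ?\<Psi> i \<omega> \<partial>M)"
      using nn_integral_exchange[OF n _ K h3] by simp
  qed
  also have "\<dots> = (\<integral>\<^sup>+\<omega>. (\<Sum>i\<in>{1..N}. ?\<Psi> i \<omega>) \<partial>M)"
    using \<Psi> by (rule nn_integral_sum[symmetric])
  also have "\<dots> = (\<integral>\<^sup>+\<omega>. of_nat m * ?h \<omega> \<partial>M)"
  proof (rule nn_integral_cong_AE)
    show "AE \<omega> in M. (\<Sum>i\<in>{1..N}. ?\<Psi> i \<omega>) = of_nat m * ?h \<omega>"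
      using count
    proof eventually_elim
      case (elim \<omega>)
      have "{1..N} \<inter> {i. (T i \<omega>, order_stat K \<omega>) \<in> R} = {i \<in> {1..N}. (T i \<omega>, order_stat K \<omega>) \<in> R}"
        by blast
      then show ?case
        using elim by (simp add: sum_distrib_left[symmetric] indicator_def mult.commute del: atLeastAtMost_iff)
    qed
  qed
  also have "\<dots> = of_nat m * (\<integral>\<^sup>+\<omega>. ?h \<omega> \<partial>M)"
    by (rule nn_integral_cmult) measurable
  finally show ?thesis .
qed

lemma integral_rank:
  fixes h :: "real \<times> real \<Rightarrow> real" and R :: "(real \<times> real) set"
  assumes n: "n \<in> {1..N}" and K: "1 \<le> K" "K \<le> N"
    and h: "h \<in> borel_measurable borel" and R: "R \<in> sets borel"
    and count: "AE \<omega> in M. card {i \<in> {1..N}. (T i \<omega>, order_stat K \<omega>) \<in> R} = m"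
  shows "real N * (\<integral>\<omega>. h (order_stat K \<omega>, TD \<omega>) * indicator R (T n \<omega>, order_stat K \<omega>) \<partial>M)
    = real m * (\<integral>\<omega>. h (order_stat K \<omega>, TD \<omega>) \<partial>M)"
proof -
  have [measurable]: "order_stat K \<in> borel_measurable M" "TD \<in> borel_measurable M" "T n \<in> borel_measurable M"
    using K n by (simp_all add: borel_measurable_order_stat random_variable_TD random_variable_T)
  have [measurable]: "R \<in> sets (borel \<Otimes>\<^sub>M borel)"
    unfolding borel_prod using R .
  have part: "(\<integral>\<^sup>+\<omega>. ennreal (real N * (g (order_stat K \<omega>, TD \<omega>) * indicator R (T n \<omega>, order_stat K \<omega>))) \<partial>M)
    = (\<integral>\<^sup>+\<omega>. ennreal (real m * g (order_stat K \<omega>, TD \<omega>)) \<partial>M)"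
    if g: "g \<in> borel_measurable borel" for g :: "real \<times> real \<Rightarrow> real"
  proof -
    have [measurable]: "g \<in> borel_measurable (borel \<Otimes>\<^sub>M borel)"
      unfolding borel_prod using g .
    have "(\<integral>\<^sup>+\<omega>. ennreal (real N * (g (order_stat K \<omega>, TD \<omega>) * indicator R (T n \<omega>, order_stat K \<omega>))) \<partial>M)
      = of_nat N * (\<integral>\<^sup>+\<omega>. ennreal (g (order_stat K \<omega>, TD \<omega>)) * indicator R (T n \<omega>, order_stat K \<omega>) \<partial>M)"
      by (subst nn_integral_cmult[symmetric]) (auto simp: ennreal_mult' ennreal_of_nat_eq_real_of_nat indicator_def intro!: nn_integral_cong)
    also have "\<dots> = of_nat m * (\<integral>\<^sup>+\<omega>. ennreal (g (order_stat K \<omega>, TD \<omega>)) \<partial>M)"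
      using g by (intro nn_integral_rank[OF n K _ R count]) simp
    also have "\<dots> = (\<integral>\<^sup>+\<omega>. ennreal (real m * g (order_stat K \<omega>, TD \<omega>)) \<partial>M)"
      by (subst nn_integral_cmult[symmetric]) (auto simp: ennreal_mult' ennreal_of_nat_eq_real_of_nat)
    finally show ?thesis .
  qed
  have "(\<integral>\<omega>. real N * (h (order_stat K \<omega>, TD \<omega>) * indicator R (T n \<omega>, order_stat K \<omega>)) \<partial>M)
    = (\<integral>\<omega>. real m * h (order_stat K \<omega>, TD \<omega>) \<partial>M)"
    using part[OF h] part[of "\<lambda>p. - h p"] h
    by (intro integral_eq_if_nn_integral_parts_eq) simp_all
  then show ?thesis
    by simp
qed

lemma integral_indicator_rank:
  fixes g :: "real \<Rightarrow> real" and R :: "(real \<times> real) set"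
  assumes n: "n \<in> {1..N}" and K: "1 \<le> K" "K \<le> N"
    and g: "g \<in> borel_measurable borel" and R: "R \<in> sets borel"
    and count: "AE \<omega> in M. card {i \<in> {1..N}. (T i \<omega>, order_stat K \<omega>) \<in> R} = m"
  shows "real N * (\<integral>\<omega>. indicator {\<omega> \<in> space M. order_stat K \<omega> < TD \<omega> \<and> (T n \<omega>, order_stat K \<omega>) \<in> R} \<omega>
      * g (order_stat K \<omega>) \<partial>M)
    = real m * (\<integral>\<omega>. (if order_stat K \<omega> < TD \<omega> then g (order_stat K \<omega>) else 0) \<partial>M)"
proof -
  let ?h = "\<lambda>(t, d). if t < d then g t else 0"
  have "?h \<in> borel_measurable (borel \<Otimes>\<^sub>M borel)"
    using g by measurable
  then have "real N * (\<integral>\<omega>. ?h (order_stat K \<omega>, TD \<omega>) * indicator R (T n \<omega>, order_stat K \<omega>) \<partial>M)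
      = real m * (\<integral>\<omega>. ?h (order_stat K \<omega>, TD \<omega>) \<partial>M)"
    by (intro integral_rank[OF n K _ R count]) (simp add: borel_prod)
  moreover have "(\<integral>\<omega>. indicator {\<omega> \<in> space M. order_stat K \<omega> < TD \<omega> \<and> (T n \<omega>, order_stat K \<omega>) \<in> R} \<omega>
      * g (order_stat K \<omega>) \<partial>M)
    = (\<integral>\<omega>. ?h (order_stat K \<omega>, TD \<omega>) * indicator R (T n \<omega>, order_stat K \<omega>) \<partial>M)"
    by (intro Bochner_Integration.integral_cong) (auto simp: indicator_def)
  ultimately show ?thesis
    by simp
qed

lemma cond_exp_event_order_stat_eq:
  fixes g :: "real \<Rightarrow> real" and n K :: nat
  defines "S \<equiv> {\<omega> \<in> space M. order_stat K \<omega> < TD \<omega> \<and> T n \<omega> \<le> order_stat K \<omega>}"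
    and "F \<equiv> {\<omega> \<in> space M. order_stat K \<omega> < TD \<omega> \<and> order_stat K \<omega> < T n \<omega>}"
  assumes n: "n \<in> {1..N}" and K: "1 \<le> K" "K \<le> N" and g: "g \<in> borel_measurable borel"
    and pos: "measure M S > 0" "measure M F > 0"
  shows "cond_exp_event M (\<lambda>\<omega>. g (order_stat K \<omega>)) S = cond_exp_event M (\<lambda>\<omega>. g (order_stat K \<omega>)) F"
proof -
  define \<Phi> where "\<Phi> f = (\<integral>\<omega>. (if order_stat K \<omega> < TD \<omega> then f (order_stat K \<omega>) else 0) \<partial>M)"
    for f :: "real \<Rightarrow> real"
  have R_le: "{p :: real \<times> real. fst p \<le> snd p} \<in> sets borel"
    by (intro borel_closed closed_Collect_le continuous_intros)
  have R_gt: "{p :: real \<times> real. snd p < fst p} \<in> sets borel"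
    by (intro borel_open open_Collect_less continuous_intros)
  have S: "real N * (\<integral>\<omega>. indicator S \<omega> * f (order_stat K \<omega>) \<partial>M) = real K * \<Phi> f"
    if "f \<in> borel_measurable borel" for f
    using integral_indicator_rank[OF n K that R_le, of K] AE_card_le_order_stat[OF K]
    by (simp add: S_def \<Phi>_def)
  have F: "real N * (\<integral>\<omega>. indicator F \<omega> * f (order_stat K \<omega>) \<partial>M) = real (N - K) * \<Phi> f"
    if "f \<in> borel_measurable borel" for f
    using integral_indicator_rank[OF n K that R_gt, of "N - K"] AE_card_gt_order_stat[OF K]
    by (simp add: F_def \<Phi>_def)
  have [measurable]: "order_stat K \<in> borel_measurable M" "TD \<in> borel_measurable M" "T n \<in> borel_measurable M"
    using K n by (simp_all add: borel_measurable_order_stat random_variable_TD random_variable_T)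
  have "S \<in> sets M" "F \<in> sets M"
    unfolding S_def F_def by measurable
  then have prob_S: "real N * measure M S = real K * \<Phi> (\<lambda>_. 1)"
    and prob_F: "real N * measure M F = real (N - K) * \<Phi> (\<lambda>_. 1)"
    using S[of "\<lambda>_. 1"] F[of "\<lambda>_. 1"] by simp_all
  have N: "real N \<noteq> 0"
    using K by simp
  show ?thesis
    using cond_exp_event_eq_divide[OF pos(1) N S[OF g] prob_S]
      cond_exp_event_eq_divide[OF pos(2) N F[OF g] prob_F] by simp
qed

end

theorem corollary1:
  fixes M :: "'a measure"
    and T :: "nat \<Rightarrow> 'a \<Rightarrow> real" and TD :: "'a \<Rightarrow> real"
    and N K n :: nat and ls ld c :: real
  assumes "prob_space M"
    and "N \<ge> 1" and "1 \<le> K" and "K \<le> N"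
    and "ls > 0" and "ld > 0" and "c > 0"
    and "n \<in> {1..N}"
    and "\<And>i. i \<in> {1..N} \<Longrightarrow> T i \<in> borel_measurable M"
    and "TD \<in> borel_measurable M"
    and "prob_space.indep_vars M (\<lambda>_. borel) (case_option TD T) (insert None (Some ` {1..N}))"
    and "\<And>i t. i \<in> {1..N} \<Longrightarrow>
           measure M {\<omega> \<in> space M. T i \<omega> \<le> t} = (if c < t then 1 - exp (- ls * (t - c)) else 0)"
    and "distributed M lborel TD (\<lambda>t. ennreal (if c < t then ld * exp (- ld * (t - c)) else 0))"
  defines "TK \<equiv> \<lambda>\<omega>. kth_smallest K (map (\<lambda>i. T i \<omega>) [1..<N+1])"
  defines "CS1 \<equiv> {\<omega> \<in> space M. TK \<omega> < TD \<omega> \<and> T n \<omega> \<le> min (TD \<omega>) (TK \<omega>)}"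
  defines "CF1 \<equiv> {\<omega> \<in> space M. TK \<omega> < TD \<omega> \<and> T n \<omega> > min (TD \<omega>) (TK \<omega>)}"
  assumes "measure M CS1 > 0" and "measure M CF1 > 0"
  shows "cond_exp_event M TK CS1 = cond_exp_event M TK CF1 \<and>
         cond_exp_event M (\<lambda>\<omega>. (TK \<omega>)\<^sup>2) CS1 = cond_exp_event M (\<lambda>\<omega>. (TK \<omega>)\<^sup>2) CF1"
proof -
  interpret P: prob_space M by fact
  interpret iid_delivery_times M N T TD
  proof
    show "T i \<in> borel_measurable M" if "i \<in> {1..N}" for i
      using assms(9) that .
    show "TD \<in> borel_measurable M" "P.indep_vars (\<lambda>_. borel) (case_option TD T) (insert None (Some ` {1..N}))"
      using assms(10,11) by simp_all
    show "distr M borel (T i) = distr M borel (T j)" if "i \<in> {1..N}" "j \<in> {1..N}" for i j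
      using that assms(9) by (intro P.distr_eq_if_cdf_eq) (simp_all add: assms(12))
    show "emeasure (distr M borel (T i)) {t} = 0" if "i \<in> {1..N}" for i t
      using that assms(5,9) by (intro P.emeasure_distr_singleton_eq_0) (simp_all add: assms(12) isCont_shifted_exponential_cdf)
  qed
  have TK: "TK = order_stat K"
    by (simp add: TK_def fun_eq_iff order_stat_def)
  have "CS1 = {\<omega> \<in> space M. order_stat K \<omega> < TD \<omega> \<and> T n \<omega> \<le> order_stat K \<omega>}"
    "CF1 = {\<omega> \<in> space M. order_stat K \<omega> < TD \<omega> \<and> order_stat K \<omega> < T n \<omega>}"
    by (auto simp: CS1_def CF1_def TK)
  then show ?thesis
    using cond_exp_event_order_stat_eq[OF assms(8,3,4), of "\<lambda>t. t"]
      cond_exp_event_order_stat_eq[OF assms(8,3,4), of "\<lambda>t. t\<^sup>2"] assms(17,18)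
    by (simp add: TK)
qed

end
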